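(* Let $\mathbf{n} > 3\mathbf{f}\ge 0$ be integers. For two transaction digests $d_1,d_2$, let $d_j.ois^C$ denote the set of ordering indicators assigned to $d_j$ by correct replicas, and suppose every element of $d_1.ois^C$ is strictly smaller than every element of $d_2.ois^C$. For $j=1,2$, let $S_j$ be a collection of ordering indicators for $d_j$, one from each replica of a set $Q_j$ of at least $\mathbf{n}-\mathbf{f}$ distinct replicas, at most $\mathbf{f}$ of which are Byzantine (arbitrary values), with every value from a correct replica of $Q_j$ lying in $d_j.ois^C$; and let $d_j.AOI$ be the $(\mathbf{f}+1)$-th smallest value of $S_j$. Then $d_1.AOI < d_2.AOI$. (Consequently, since the protocol orders transactions in increasing order of $AOI$, the transaction with digest $d_1$ is ordered before the one with digest $d_2$.)
   Context: Setting: $\mathbf{n}$ replicas, at most $\mathbf{f}$ Byzantine; each replica assigns a numerical ordering indicator to each transaction it receives, correct replicas honestly, Byzantine replicas arbitrarily. The assigned ordering indicator $AOI$ of a transaction is the $(\mathbf{f}+1)$-th smallest value in a committed collection of at least $\mathbf{n}-\mathbf{f}$ ordering indicators for it (at most one per replica). Ordering Linearizability: if all correct ordering indicators of $T_1$ are smaller than all correct ordering indicators of $T_2$, then $T_1$ is ordered before $T_2$. *)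

theory Defs
  imports Complex_Main "HOL-Library.Multiset"
begin

definition kth_smallest :: "nat \<Rightarrow> real multiset \<Rightarrow> real" where
  "kth_smallest k M = sorted_list_of_multiset M ! (k - 1)"

definition AOI :: "nat \<Rightarrow> 'r set \<Rightarrow> ('r \<Rightarrow> real) \<Rightarrow> real" where
  "AOI f Q v = kth_smallest (f + 1) (image_mset v (mset_set Q))"

end

theory Submission
  imports Defs
begin

text \<open>With at least \<open>2f + 1\<close> values, at least \<open>f + 1\<close> of them are \<open>\<le>\<close> the \<open>(f+1)\<close>-th smallest
  and at least \<open>f + 1\<close> are \<open>\<ge>\<close> it. At most \<open>f\<close> of these come from Byzantine replicas, so the
  assigned ordering indicator is sandwiched between two values of correct replicas. Hence
  \<open>AOI\<^sub>1 \<le> v\<^sub>1 r\<^sub>1 < v\<^sub>2 r\<^sub>2 \<le> AOI\<^sub>2\<close> for some correct \<open>r\<^sub>1 \<in> Q\<^sub>1\<close>, \<open>r\<^sub>2 \<in> Q\<^sub>2\<close>.\<close>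

lemma size_filter_mset_ge_size:
  assumes "mset ys \<subseteq># mset xs" "\<forall>y\<in>set ys. P y"
  shows "length ys \<le> size (filter_mset P (mset xs))"
proof -
  have "mset ys = filter_mset P (mset ys)"
    using assms(2) by (metis filter_True mset_filter)
  also have "\<dots> \<subseteq># filter_mset P (mset xs)"
    using assms(1) by (rule multiset_filter_mono)
  finally show ?thesis
    by (metis size_mset size_mset_mono)
qed

lemma sorted_count_le_nth:
  fixes xs :: "'a::linorder list"
  assumes "sorted xs" "k < length xs"
  shows "k + 1 \<le> size (filter_mset (\<lambda>x. x \<le> xs ! k) (mset xs))"
proof -
  have "\<forall>y\<in>set (take (k + 1) xs). y \<le> xs ! k"
    using assms by (auto simp: in_set_conv_nth sorted_iff_nth_mono)
  moreover have "mset (take (k + 1) xs) \<subseteq># mset xs"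
    by (metis append_take_drop_id mset_append mset_subset_eq_add_left)
  ultimately show ?thesis
    using size_filter_mset_ge_size assms(2) by fastforce
qed

lemma sorted_count_ge_nth:
  fixes xs :: "'a::linorder list"
  assumes "sorted xs" "k < length xs"
  shows "length xs - k \<le> size (filter_mset (\<lambda>x. xs ! k \<le> x) (mset xs))"
proof -
  have "\<forall>y\<in>set (drop k xs). xs ! k \<le> y"
    using assms by (auto simp: in_set_conv_nth sorted_iff_nth_mono)
  moreover have "mset (drop k xs) \<subseteq># mset xs"
    by (metis append_take_drop_id mset_append mset_subset_eq_add_right)
  ultimately show ?thesis
    using size_filter_mset_ge_size by fastforce
qed

lemma kth_smallest_rank:
  assumes "1 \<le> k" "k \<le> size M"
  shows "k \<le> size (filter_mset (\<lambda>x. x \<le> kth_smallest k M) M)"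
    and "size M + 1 - k \<le> size (filter_mset (\<lambda>x. kth_smallest k M \<le> x) M)"
proof -
  define xs where "xs = sorted_list_of_multiset M"
  have xs: "sorted xs" "mset xs = M" "length xs = size M"
    unfolding xs_def by (simp_all flip: size_mset)
  have kth: "kth_smallest k M = xs ! (k - 1)"
    unfolding kth_smallest_def xs_def ..
  have "k - 1 < length xs"
    using assms xs(3) by simp
  from sorted_count_le_nth[OF xs(1) this] sorted_count_ge_nth[OF xs(1) this]
  show "k \<le> size (filter_mset (\<lambda>x. x \<le> kth_smallest k M) M)"
    and "size M + 1 - k \<le> size (filter_mset (\<lambda>x. kth_smallest k M \<le> x) M)"
    using assms(1) by (simp_all add: kth xs)
qed

lemma size_filter_image_mset_mset_set:
  assumes "finite Q"
  shows "size (filter_mset P (image_mset v (mset_set Q))) = card {r\<in>Q. P (v r)}"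
  using assms by (simp add: filter_mset_image_mset filter_mset_mset_set)

lemma card_gt_card_imp_ex_outside:
  assumes "finite B" "card B < card {r\<in>Q. P r}"
  shows "\<exists>r\<in>Q - B. P r"
proof (rule ccontr)
  assume "\<not> ?thesis"
  then have "{r\<in>Q. P r} \<subseteq> B" by auto
  then have "card {r\<in>Q. P r} \<le> card B"
    using assms(1) by (rule card_mono[rotated])
  with assms(2) show False by simp
qed

lemma AOI_between_correct_values:
  fixes v :: "'r \<Rightarrow> real"
  assumes "finite Q" "2 * f + 1 \<le> card Q" "finite B" "card B \<le> f"
  shows "\<exists>r\<in>Q - B. v r \<le> AOI f Q v"
    and "\<exists>r\<in>Q - B. AOI f Q v \<le> v r"
proof -
  define M where "M = image_mset v (mset_set Q)"
  have size_M: "size M = card Q"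
    unfolding M_def by simp
  have AOI: "AOI f Q v = kth_smallest (f + 1) M"
    unfolding AOI_def M_def ..
  have "f + 1 \<le> size (filter_mset (\<lambda>x. x \<le> AOI f Q v) M)"
    and "card Q - f \<le> size (filter_mset (\<lambda>x. AOI f Q v \<le> x) M)"
    using kth_smallest_rank[of "f + 1" M] assms(2) by (simp_all add: size_M AOI)
  then have "f + 1 \<le> card {r\<in>Q. v r \<le> AOI f Q v}"
    and "f + 1 \<le> card {r\<in>Q. AOI f Q v \<le> v r}"
    using assms(2) by (simp_all add: M_def size_filter_image_mset_mset_set[OF assms(1)])
  with assms(3,4) show "\<exists>r\<in>Q - B. v r \<le> AOI f Q v"
    and "\<exists>r\<in>Q - B. AOI f Q v \<le> v r"
    by (auto intro!: card_gt_card_imp_ex_outside)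
qed

theorem mainTheorem2:
  fixes n f :: nat
    and Rep Byz Q1 Q2 :: "'r set"
    and C1 C2 :: "real set"
    and v1 v2 :: "'r \<Rightarrow> real"
  assumes "n > 3 * f"
    and "finite Rep" and "card Rep = n"
    and "Byz \<subseteq> Rep" and "card Byz \<le> f"
    and "\<forall>x\<in>C1. \<forall>y\<in>C2. x < y"
    and "Q1 \<subseteq> Rep" and "card Q1 \<ge> n - f"
    and "\<forall>r\<in>Q1 - Byz. v1 r \<in> C1"
    and "Q2 \<subseteq> Rep" and "card Q2 \<ge> n - f"
    and "\<forall>r\<in>Q2 - Byz. v2 r \<in> C2"
  shows "AOI f Q1 v1 < AOI f Q2 v2"
proof -
  have finite: "finite Byz" "finite Q1" "finite Q2"
    using assms(2,4,7,10) finite_subset by blast+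
  have large: "2 * f + 1 \<le> card Q1" "2 * f + 1 \<le> card Q2"
    using assms(1,8,11) by linarith+
  obtain r1 where r1: "r1 \<in> Q1 - Byz" "AOI f Q1 v1 \<le> v1 r1"
    using AOI_between_correct_values(2)[OF finite(2) large(1) finite(1) assms(5)] by blast
  obtain r2 where r2: "r2 \<in> Q2 - Byz" "v2 r2 \<le> AOI f Q2 v2"
    using AOI_between_correct_values(1)[OF finite(3) large(2) finite(1) assms(5)] by blast
  have "v1 r1 < v2 r2"
    using assms(6,9,12) r1(1) r2(1) by blast
  with r1(2) r2(2) show ?thesis
    by linarith
qed

end
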